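(* In the Nakagami model with parameters $L_c>0$, $L_s>0$, the expected distortion of uncoded transmission, $ED_u(\rho)=\mathrm E\!\left[\frac{1}{1+H+\Gamma}\right]$, satisfies $$\lim_{\rho\to\infty}-\frac{\log ED_u(\rho)}{\log\rho}=\min\{L_s+L_c,1\}.$$
   Context: Nakagami model: for SNR $\rho>0$, $H=\rho H_0$ and $\Gamma=\rho\Gamma_0$, where $H_0,\Gamma_0$ are independent, $H_0$ is Gamma distributed with shape $L_c$ and scale $1/L_c$, and $\Gamma_0$ is Gamma distributed with shape $L_s$ and scale $1/L_s$ (Gamma$(L,\theta)$ density $\frac{1}{\theta^L\Gamma(L)}x^{L-1}e^{-x/\theta}$, $x\ge0$). *)

theory Defs
  imports "HOL-Probability.Probability"
begin

definition gamma_density :: "real \<Rightarrow> real \<Rightarrow> real \<Rightarrow> real" where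
  "gamma_density L \<theta> x =
     (if x < 0 then 0 else x powr (L - 1) * exp (- x / \<theta>) / (\<theta> powr L * Gamma L))"

end

theory Submission
  imports Defs "HOL-Real_Asymp.Real_Asymp"
begin

text \<open>Both bounds on \<open>ED\<^sub>u(\<rho>)\<close> are powers of \<open>\<rho>\<close>. From below: on the event
  \<open>H0, \<Gamma>0 \<le> s\<close> the integrand is at least \<open>1 / (1 + 2\<rho>s)\<close>, and a Gamma variable of shape \<open>L\<close>
  satisfies \<open>P(X \<le> s) \<ge> \<kappa> s\<^sup>L\<close> for \<open>s \<le> 1\<close>; by independence
  \<open>ED\<^sub>u(\<rho>) \<ge> k s\<^bsup>Lc+Ls\<^esup> / (1 + 2\<rho>s)\<close>, and \<open>s = 1/(2\<rho>)\<close> resp. \<open>s = 1\<close> gives order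
  \<open>\<rho>\<^bsup>-min(Lc+Ls,1)\<^esup>\<close>. From above: for \<open>0 < a < min(Lc+Ls,1)\<close> split \<open>a = p + q\<close> with
  \<open>p < Lc\<close>, \<open>q < Ls\<close>; then \<open>1/(1 + \<rho>x + \<rho>y) \<le> \<rho>\<^bsup>-a\<^esup> x\<^bsup>-p\<^esup> y\<^bsup>-q\<^esup>\<close>, and the negative
  moments \<open>E H0\<^bsup>-p\<^esup>\<close>, \<open>E \<Gamma>0\<^bsup>-q\<^esup>\<close> are finite, so \<open>ED\<^sub>u(\<rho>) = O(\<rho>\<^bsup>-a\<^esup>)\<close>.\<close>

lemma tendsto_neg_ln_div_ln_at_top:
  fixes f :: "real \<Rightarrow> real" and m c :: real
  assumes "0 < m" "0 < c"
    and lower: "\<forall>\<^sub>F x in at_top. c * x powr (-m) \<le> f x"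
    and upper: "\<And>a. 0 < a \<Longrightarrow> a < m \<Longrightarrow> \<exists>C. \<forall>\<^sub>F x in at_top. f x \<le> C * x powr (-a)"
  shows "((\<lambda>x. - ln (f x) / ln x) \<longlongrightarrow> m) at_top"
proof (rule order_tendstoI)
  have lower_ln: "\<forall>\<^sub>F x in at_top. - ln (f x) / ln x \<le> m - ln c / ln x"
    using lower eventually_gt_at_top[of 1]
  proof eventually_elim
    case (elim x)
    have "0 < c * x powr (-m)" using \<open>0 < c\<close> elim by simp
    then have "ln (c * x powr (-m)) \<le> ln (f x)" using elim by simp
    then have "ln c - m * ln x \<le> ln (f x)" using elim \<open>0 < c\<close> by (simp add: ln_mult ln_powr)
    then show ?case using elim by (simp add: field_simps)
  qed
  fix b assume "m < b"
  have "((\<lambda>x. m - ln c / ln x) \<longlongrightarrow> m) at_top" by real_asymp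
  from order_tendstoD(2)[OF this \<open>m < b\<close>]
  have "\<forall>\<^sub>F x in at_top. m - ln c / ln x < b" .
  with lower_ln show "\<forall>\<^sub>F x in at_top. - ln (f x) / ln x < b"
    by eventually_elim simp
next
  fix b assume "b < m"
  define a where "a = (max b 0 + m) / 2"
  have a: "0 < a" "a < m" "b < a" using \<open>b < m\<close> \<open>0 < m\<close> by (auto simp: a_def)
  then obtain C where C: "\<forall>\<^sub>F x in at_top. f x \<le> C * x powr (-a)" using upper by blast
  have upper_ln: "\<forall>\<^sub>F x in at_top. a - ln C / ln x \<le> - ln (f x) / ln x"
    using C lower eventually_gt_at_top[of 1]
  proof eventually_elim
    case (elim x)
    have "0 < c * x powr (-m)" using \<open>0 < c\<close> elim by simp
    then have "0 < f x" using elim by linarith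
    then have "0 < C * x powr (-a)" using elim by linarith
    then have "0 < C" by (simp add: zero_less_mult_iff)
    have "ln (f x) \<le> ln (C * x powr (-a))" using elim \<open>0 < f x\<close> by simp
    then have "ln (f x) \<le> ln C - a * ln x"
      using elim \<open>0 < C\<close> by (simp add: ln_mult ln_powr)
    then have "(a * ln x - ln C) / ln x \<le> - ln (f x) / ln x"
      using elim by (intro divide_right_mono) auto
    then show ?case using elim by (simp add: diff_divide_distrib)
  qed
  have "((\<lambda>x. a - ln C / ln x) \<longlongrightarrow> a) at_top" by real_asymp
  from order_tendstoD(1)[OF this \<open>b < a\<close>]
  have "\<forall>\<^sub>F x in at_top. b < a - ln C / ln x" .
  with upper_ln show "\<forall>\<^sub>F x in at_top. b < - ln (f x) / ln x"
    by eventually_elim simp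
qed

lemma (in prob_space) indep_var_nn_integral_mult:
  fixes X Y :: "'a \<Rightarrow> 'b::topological_space"
  assumes indep: "indep_var borel X borel Y"
    and [measurable]: "f \<in> borel_measurable borel" "g \<in> borel_measurable borel"
  shows "(\<integral>\<^sup>+\<omega>. f (X \<omega>) * g (Y \<omega>) \<partial>M)
    = (\<integral>\<^sup>+\<omega>. f (X \<omega>) \<partial>M) * (\<integral>\<^sup>+\<omega>. g (Y \<omega>) \<partial>M)"
proof -
  have [measurable]: "X \<in> borel_measurable M" "Y \<in> borel_measurable M"
    using indep by (auto dest: indep_var_rv1 indep_var_rv2)
  interpret Y: prob_space "distr M borel Y"
    by (rule prob_space_distr) simp
  have "(\<integral>\<^sup>+\<omega>. f (X \<omega>) * g (Y \<omega>) \<partial>M) =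
      (\<integral>\<^sup>+z. f (fst z) * g (snd z) \<partial>distr M (borel \<Otimes>\<^sub>M borel) (\<lambda>\<omega>. (X \<omega>, Y \<omega>)))"
    by (simp add: nn_integral_distr)
  also have "\<dots> = (\<integral>\<^sup>+z. f (fst z) * g (snd z) \<partial>(distr M borel X \<Otimes>\<^sub>M distr M borel Y))"
    using indep by (simp add: indep_var_distribution_eq)
  also have "\<dots> = (\<integral>\<^sup>+x. \<integral>\<^sup>+y. f x * g y \<partial>distr M borel Y \<partial>distr M borel X)"
    using Y.nn_integral_fst[of "\<lambda>z. f (fst z) * g (snd z)" "distr M borel X"] by simp
  also have "\<dots> = (\<integral>\<^sup>+x. f x \<partial>distr M borel X) * (\<integral>\<^sup>+y. g y \<partial>distr M borel Y)"
    by (simp add: nn_integral_cmult nn_integral_multc)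
  finally show ?thesis
    by (simp add: nn_integral_distr)
qed

lemma borel_measurable_gamma_density [measurable]: "gamma_density L \<theta> \<in> borel_measurable borel"
  unfolding gamma_density_def by measurable

lemma gamma_density_nonpos: "x \<le> 0 \<Longrightarrow> gamma_density L \<theta> x = 0"
  by (simp add: gamma_density_def)

lemma gamma_density_nonneg: "0 < L \<Longrightarrow> 0 < \<theta> \<Longrightarrow> 0 \<le> gamma_density L \<theta> x"
  by (simp add: gamma_density_def)

lemma gamma_density_le:
  assumes "0 < L" "0 < \<theta>"
  shows "gamma_density L \<theta> x \<le> x powr (L - 1) / (\<theta> powr L * Gamma L)"
proof (cases "x < 0")
  case False
  then have "exp (- x / \<theta>) \<le> 1" using assms by simp
  then show ?thesis
    using False assms by (simp add: gamma_density_def divide_right_mono mult_left_le)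
qed (use assms in \<open>simp add: gamma_density_def\<close>)

lemma gamma_density_ge:
  assumes "0 < L" "0 < \<theta>" "0 \<le> x" "x \<le> 1"
  shows "exp (- 1 / \<theta>) * x powr (L - 1) / (\<theta> powr L * Gamma L) \<le> gamma_density L \<theta> x"
proof -
  have "exp (- 1 / \<theta>) \<le> exp (- x / \<theta>)" using assms by (simp add: divide_right_mono)
  then have "exp (- 1 / \<theta>) * x powr (L - 1) \<le> x powr (L - 1) * exp (- x / \<theta>)"
    by (subst mult.commute) (intro mult_right_mono; simp)
  then show ?thesis
    using assms by (simp add: gamma_density_def divide_right_mono)
qed

lemma nn_integral_powr_Icc:
  assumes "0 < a" "0 \<le> s"
  shows "(\<integral>\<^sup>+x. ennreal (x powr (a - 1)) * indicator {0..s} x \<partial>lborel) = ennreal (s powr a / a)"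
proof -
  have "((\<lambda>x. x powr (a - 1)) has_integral (s powr (a - 1 + 1) / (a - 1 + 1))) {0..s}"
    by (rule has_integral_powr_from_0) (use assms in auto)
  then show ?thesis
    by (subst nn_integral_has_integral_lebesgue') auto
qed

text \<open>Strict positivity matters below because \<open>0 powr (-p) = 0\<close>.\<close>

lemma gamma_distributed_AE_pos:
  assumes "distributed M lborel X (\<lambda>x. ennreal (gamma_density L \<theta> x))"
  shows "AE \<omega> in M. 0 < X \<omega>"
proof -
  have "AE x in density lborel (\<lambda>x. ennreal (gamma_density L \<theta> x)). 0 < x"
    by (subst AE_density) (auto intro!: AE_I2 intro: ccontr simp: gamma_density_nonpos not_less)
  then have "AE x in distr M lborel X. 0 < x"
    unfolding distributed_distr_eq_density[OF assms] .
  then show ?thesis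
    by (rule AE_distrD[OF distributed_measurable[OF assms]])
qed

lemma gamma_distributed_lower_tail:
  assumes "0 < L" "0 < \<theta>" and X: "distributed M lborel X (\<lambda>x. ennreal (gamma_density L \<theta> x))"
  shows "\<exists>\<kappa>>0. \<forall>s\<in>{0..1}. ennreal (\<kappa> * s powr L) \<le> (\<integral>\<^sup>+\<omega>. indicator {..s} (X \<omega>) \<partial>M)"
proof (intro exI conjI ballI)
  define k where "k = exp (- 1 / \<theta>) / (\<theta> powr L * Gamma L)"
  have "0 < k" using assms by (simp add: k_def)
  then show "0 < k / L" using assms by simp
  fix s :: real assume s: "s \<in> {0..1}"
  have "ennreal (k / L * s powr L) = ennreal k * ennreal (s powr L / L)"
    using ennreal_mult[of k "s powr L / L"] \<open>0 < k\<close> assms by simp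
  also have "\<dots> = (\<integral>\<^sup>+x. ennreal k * (ennreal (x powr (L - 1)) * indicator {0..s} x) \<partial>lborel)"
    using assms s by (simp add: nn_integral_cmult nn_integral_powr_Icc)
  also have "\<dots> \<le> (\<integral>\<^sup>+x. ennreal (gamma_density L \<theta> x) * indicator {..s} x \<partial>lborel)"
  proof (intro nn_integral_mono)
    fix x
    show "ennreal k * (ennreal (x powr (L - 1)) * indicator {0..s} x)
        \<le> ennreal (gamma_density L \<theta> x) * indicator {..s} x"
    proof (cases "x \<in> {0..s}")
      case True
      then have "k * x powr (L - 1) \<le> gamma_density L \<theta> x"
        using gamma_density_ge[OF assms(1,2), of x] s by (simp add: k_def)
      then show ?thesis using True \<open>0 < k\<close> by (auto simp: ennreal_mult[symmetric] intro!: ennreal_leI)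
    qed simp
  qed
  also have "\<dots> = (\<integral>\<^sup>+\<omega>. indicator {..s} (X \<omega>) \<partial>M)"
    by (rule distributed_nn_integral[OF X]) simp
  finally show "ennreal (k / L * s powr L) \<le> (\<integral>\<^sup>+\<omega>. indicator {..s} (X \<omega>) \<partial>M)" .
qed

lemma gamma_distributed_negative_moment_finite:
  assumes "prob_space M" "0 < L" "0 < \<theta>" "0 \<le> p" "p < L"
    and X: "distributed M lborel X (\<lambda>x. ennreal (gamma_density L \<theta> x))"
  shows "(\<integral>\<^sup>+\<omega>. ennreal (X \<omega> powr (-p)) \<partial>M) < \<infinity>"
proof -
  define K where "K = 1 / (\<theta> powr L * Gamma L)"
  have "0 < K" using assms by (simp add: K_def)
  have "(\<integral>\<^sup>+\<omega>. ennreal (X \<omega> powr (-p)) \<partial>M) =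
      (\<integral>\<^sup>+x. ennreal (gamma_density L \<theta> x) * ennreal (x powr (-p)) \<partial>lborel)"
    by (rule distributed_nn_integral[OF X, symmetric]) simp
  also have "\<dots> \<le> (\<integral>\<^sup>+x. ennreal K * (ennreal (x powr ((L - p) - 1)) * indicator {0..1} x)
      + ennreal (gamma_density L \<theta> x) \<partial>lborel)"
  proof (intro nn_integral_mono)
    fix x :: real
    consider "x \<le> 0" | "0 < x" "x \<le> 1" | "1 < x" by (metis not_less)
    then show "ennreal (gamma_density L \<theta> x) * ennreal (x powr (-p))
        \<le> ennreal K * (ennreal (x powr ((L - p) - 1)) * indicator {0..1} x)
          + ennreal (gamma_density L \<theta> x)"
    proof cases
      case 1
      then show ?thesis by (simp add: gamma_density_nonpos)
    next
      case 2
      have "gamma_density L \<theta> x * x powr (-p) \<le> K * x powr (L - 1) * x powr (-p)"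
        using gamma_density_le[OF assms(2,3), of x] by (intro mult_right_mono) (auto simp: K_def)
      also have "\<dots> = K * x powr ((L - p) - 1)"
        using 2 by (simp add: powr_add[symmetric] algebra_simps)
      finally show ?thesis
        using 2 \<open>0 < K\<close> gamma_density_nonneg[OF assms(2,3), of x]
        by (simp add: ennreal_mult[symmetric] add_increasing2)
    next
      case 3
      then have "x powr (-p) \<le> 1" using assms by (simp add: powr_minus inverse_le_1_iff ge_one_powr_ge_zero)
      then have "gamma_density L \<theta> x * x powr (-p) \<le> gamma_density L \<theta> x"
        using gamma_density_nonneg[OF assms(2,3), of x] by (simp add: mult_left_le)
      then show ?thesis
        using gamma_density_nonneg[OF assms(2,3), of x] by (simp add: ennreal_mult[symmetric] add_increasing)
    qed
  qed
  also have "\<dots> = ennreal K * ennreal (1 / (L - p)) + (\<integral>\<^sup>+\<omega>. 1 \<partial>M)"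
    using assms by (simp add: nn_integral_add nn_integral_cmult nn_integral_powr_Icc
        distributed_nn_integral[OF X, of "\<lambda>_. 1", simplified])
  also have "\<dots> < \<infinity>"
    using prob_space.emeasure_space_1[OF assms(1)] by (simp add: ennreal_mult_less_top)
  finally show ?thesis .
qed

lemma one_div_one_plus_le_powr:
  fixes \<rho> x y a p q :: real
  assumes "0 < \<rho>" "0 < x" "0 < y" "a \<le> 1" "0 \<le> p" "0 \<le> q" "p + q = a"
  shows "1 / (1 + \<rho> * x + \<rho> * y) \<le> \<rho> powr (-a) * x powr (-p) * y powr (-q)"
proof -
  define t where "t = \<rho> * (x + y)"
  have "0 < t" using assms by (simp add: t_def)
  have "0 \<le> a" using assms by simp
  have "t powr a \<le> 1 + t"
  proof (cases "1 \<le> t")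
    case True
    then have "t powr a \<le> t powr 1" using assms by (intro powr_mono) auto
    then show ?thesis using \<open>0 < t\<close> by simp
  next
    case False
    then have "t powr a \<le> 1" using \<open>0 < t\<close> \<open>0 \<le> a\<close> by (intro powr_le1) auto
    then show ?thesis using \<open>0 < t\<close> by simp
  qed
  have "x powr p * y powr q \<le> (x + y) powr p * (x + y) powr q"
    using assms by (intro mult_mono powr_mono2) auto
  then have "\<rho> powr a * (x powr p * y powr q) \<le> \<rho> powr a * (x + y) powr a"
    using assms by (simp add: powr_add[symmetric])
  also have "\<dots> = t powr a" using assms by (simp add: t_def powr_mult)
  also have "\<dots> \<le> 1 + \<rho> * x + \<rho> * y" using \<open>t powr a \<le> 1 + t\<close> by (simp add: t_def algebra_simps)
  finally have "1 / (1 + \<rho> * x + \<rho> * y) \<le> 1 / (\<rho> powr a * (x powr p * y powr q))"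
    using assms by (intro divide_left_mono) (auto intro!: mult_pos_pos add_pos_pos)
  also have "\<dots> = \<rho> powr (-a) * x powr (-p) * y powr (-q)"
    by (simp add: powr_minus field_simps)
  finally show ?thesis .
qed

locale nakagami = prob_space M for M :: "'a measure" +
  fixes H0 \<Gamma>0 :: "'a \<Rightarrow> real" and Lc Ls :: real
  assumes Lc_pos: "0 < Lc" and Ls_pos: "0 < Ls"
    and indep: "indep_var borel H0 borel \<Gamma>0"
    and H0_distributed: "distributed M lborel H0 (\<lambda>x. ennreal (gamma_density Lc (1 / Lc) x))"
    and \<Gamma>0_distributed: "distributed M lborel \<Gamma>0 (\<lambda>x. ennreal (gamma_density Ls (1 / Ls) x))"
begin

definition expected_distortion :: "real \<Rightarrow> real" where
  "expected_distortion \<rho> = expectation (\<lambda>\<omega>. 1 / (1 + \<rho> * H0 \<omega> + \<rho> * \<Gamma>0 \<omega>))"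

lemma borel_measurable_H0_\<Gamma>0 [measurable]:
  "H0 \<in> borel_measurable M" "\<Gamma>0 \<in> borel_measurable M"
  using indep by (auto dest: indep_var_rv1 indep_var_rv2)

lemma AE_H0_\<Gamma>0_pos: "AE \<omega> in M. 0 < H0 \<omega> \<and> 0 < \<Gamma>0 \<omega>"
  using gamma_distributed_AE_pos[OF H0_distributed] gamma_distributed_AE_pos[OF \<Gamma>0_distributed]
  by eventually_elim simp

lemma ennreal_expected_distortion:
  assumes "0 \<le> \<rho>"
  shows "ennreal (expected_distortion \<rho>) = (\<integral>\<^sup>+\<omega>. ennreal (1 / (1 + \<rho> * H0 \<omega> + \<rho> * \<Gamma>0 \<omega>)) \<partial>M)"
proof -
  have bounds: "AE \<omega> in M. 0 \<le> 1 / (1 + \<rho> * H0 \<omega> + \<rho> * \<Gamma>0 \<omega>)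
      \<and> 1 / (1 + \<rho> * H0 \<omega> + \<rho> * \<Gamma>0 \<omega>) \<le> 1"
    using AE_H0_\<Gamma>0_pos
  proof eventually_elim
    case (elim \<omega>)
    then have "0 \<le> \<rho> * H0 \<omega> + \<rho> * \<Gamma>0 \<omega>" using assms by simp
    then show ?case by (simp add: add.assoc)
  qed
  then have "integrable M (\<lambda>\<omega>. 1 / (1 + \<rho> * H0 \<omega> + \<rho> * \<Gamma>0 \<omega>))"
    by (intro integrable_const_bound[where B = 1]) (auto elim: AE_mp)
  then show ?thesis
    unfolding expected_distortion_def using bounds by (subst nn_integral_eq_integral) auto
qed

lemma expected_distortion_nonneg: "0 \<le> \<rho> \<Longrightarrow> 0 \<le> expected_distortion \<rho>"
  unfolding expected_distortion_def
  by (rule integral_nonneg_AE) (use AE_H0_\<Gamma>0_pos in \<open>eventually_elim, simp\<close>)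

lemma expected_distortion_ge:
  "\<exists>k>0. \<forall>\<rho>\<ge>0. \<forall>s\<in>{0..1}. k * s powr (Lc + Ls) / (1 + 2 * \<rho> * s) \<le> expected_distortion \<rho>"
proof -
  obtain \<kappa>c where \<kappa>c: "0 < \<kappa>c"
      "\<And>s. s \<in> {0..1} \<Longrightarrow> ennreal (\<kappa>c * s powr Lc) \<le> (\<integral>\<^sup>+\<omega>. indicator {..s} (H0 \<omega>) \<partial>M)"
    using gamma_distributed_lower_tail[OF Lc_pos _ H0_distributed] Lc_pos by auto
  obtain \<kappa>s where \<kappa>s: "0 < \<kappa>s"
      "\<And>s. s \<in> {0..1} \<Longrightarrow> ennreal (\<kappa>s * s powr Ls) \<le> (\<integral>\<^sup>+\<omega>. indicator {..s} (\<Gamma>0 \<omega>) \<partial>M)"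
    using gamma_distributed_lower_tail[OF Ls_pos _ \<Gamma>0_distributed] Ls_pos by auto
  have "\<kappa>c * \<kappa>s * s powr (Lc + Ls) / (1 + 2 * \<rho> * s) \<le> expected_distortion \<rho>"
    if \<rho>: "0 \<le> \<rho>" and s: "s \<in> {0..1}" for \<rho> s
  proof -
    define c where "c = 1 / (1 + 2 * \<rho> * s)"
    have "0 < c" using \<rho> s by (simp add: c_def add_pos_nonneg)
    have "ennreal (\<kappa>c * \<kappa>s * s powr (Lc + Ls) / (1 + 2 * \<rho> * s))
        = ennreal c * (ennreal (\<kappa>c * s powr Lc) * ennreal (\<kappa>s * s powr Ls))"
      using \<open>0 < c\<close> \<kappa>c(1) \<kappa>s(1) by (simp add: c_def ennreal_mult[symmetric] powr_add mult_ac)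
    also have "\<dots> \<le> ennreal c * ((\<integral>\<^sup>+\<omega>. indicator {..s} (H0 \<omega>) \<partial>M) * (\<integral>\<^sup>+\<omega>. indicator {..s} (\<Gamma>0 \<omega>) \<partial>M))"
      using s by (intro mult_left_mono mult_mono \<kappa>c \<kappa>s) auto
    also have "\<dots> = (\<integral>\<^sup>+\<omega>. ennreal c * (indicator {..s} (H0 \<omega>) * indicator {..s} (\<Gamma>0 \<omega>)) \<partial>M)"
      by (simp add: indep_var_nn_integral_mult[OF indep] nn_integral_cmult)
    also have "\<dots> \<le> (\<integral>\<^sup>+\<omega>. ennreal (1 / (1 + \<rho> * H0 \<omega> + \<rho> * \<Gamma>0 \<omega>)) \<partial>M)"
      using AE_H0_\<Gamma>0_pos
    proof (intro nn_integral_mono_AE, eventually_elim)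
      case (elim \<omega>)
      show ?case
      proof (cases "H0 \<omega> \<le> s \<and> \<Gamma>0 \<omega> \<le> s")
        case True
        then have "\<rho> * H0 \<omega> \<le> \<rho> * s" "\<rho> * \<Gamma>0 \<omega> \<le> \<rho> * s"
          using \<rho> by (auto intro: mult_left_mono)
        moreover have "0 \<le> \<rho> * H0 \<omega>" "0 \<le> \<rho> * \<Gamma>0 \<omega>" "0 \<le> \<rho> * s"
          using elim \<rho> s by simp_all
        ultimately have "c \<le> 1 / (1 + \<rho> * H0 \<omega> + \<rho> * \<Gamma>0 \<omega>)"
          unfolding c_def by (intro divide_left_mono mult_pos_pos) linarith+
        then show ?thesis using True by (simp add: ennreal_leI)
      qed auto
    qed
    also have "\<dots> = ennreal (expected_distortion \<rho>)"
      by (rule ennreal_expected_distortion[OF \<rho>, symmetric])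
    finally show ?thesis
      using expected_distortion_nonneg[OF \<rho>] by simp
  qed
  then show ?thesis
    using \<kappa>c(1) \<kappa>s(1) by (intro exI[of _ "\<kappa>c * \<kappa>s"]) auto
qed

lemma expected_distortion_lower_bound:
  "\<exists>c>0. \<forall>\<^sub>F \<rho> in at_top. c * \<rho> powr (- min (Ls + Lc) 1) \<le> expected_distortion \<rho>"
proof -
  obtain k where k: "0 < k"
      "\<And>\<rho> s. 0 \<le> \<rho> \<Longrightarrow> s \<in> {0..1} \<Longrightarrow> k * s powr (Lc + Ls) / (1 + 2 * \<rho> * s) \<le> expected_distortion \<rho>"
    using expected_distortion_ge by blast
  show ?thesis
  proof (cases "Ls + Lc \<le> 1")
    case True
    have "k / (2 * 2 powr (Lc + Ls)) * \<rho> powr (- min (Ls + Lc) 1) \<le> expected_distortion \<rho>"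
      if "1 \<le> \<rho>" for \<rho>
    proof -
      have "\<rho> powr (- min (Ls + Lc) 1) = 1 / \<rho> powr (Lc + Ls)"
        using True powr_minus_divide[of \<rho> "Lc + Ls"] by (simp add: add.commute)
      moreover have "(1 / (2 * \<rho>)) powr (Lc + Ls) = 1 / (2 powr (Lc + Ls) * \<rho> powr (Lc + Ls))"
        using that by (simp add: powr_divide powr_mult)
      ultimately have "k / (2 * 2 powr (Lc + Ls)) * \<rho> powr (- min (Ls + Lc) 1)
          = k * (1 / (2 * \<rho>)) powr (Lc + Ls) / (1 + 2 * \<rho> * (1 / (2 * \<rho>)))"
        using that by simp
      also have "\<dots> \<le> expected_distortion \<rho>" using that by (intro k(2)) auto
      finally show ?thesis .
    qed
    then show ?thesis
      using k(1) by (intro exI[of _ "k / (2 * 2 powr (Lc + Ls))"] conjI eventually_at_top_linorderI[of 1]) auto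
  next
    case False
    have "k / 3 * \<rho> powr (- min (Ls + Lc) 1) \<le> expected_distortion \<rho>" if "1 \<le> \<rho>" for \<rho>
    proof -
      have "k / 3 * \<rho> powr (- min (Ls + Lc) 1) = k / (3 * \<rho>)"
        using False that by (simp add: powr_minus_divide)
      also have "\<dots> \<le> k / (1 + 2 * \<rho>)"
        using that k(1) by (intro divide_left_mono) auto
      also have "\<dots> = k * 1 powr (Lc + Ls) / (1 + 2 * \<rho> * 1)"
        by simp
      also have "\<dots> \<le> expected_distortion \<rho>" using that by (intro k(2)) auto
      finally show ?thesis .
    qed
    then show ?thesis
      using k(1) by (intro exI[of _ "k / 3"] conjI eventually_at_top_linorderI[of 1]) auto
  qed
qed

lemma expected_distortion_upper_bound:
  assumes "0 < a" "a < min (Ls + Lc) 1"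
  shows "\<exists>C. \<forall>\<^sub>F \<rho> in at_top. expected_distortion \<rho> \<le> C * \<rho> powr (-a)"
proof -
  define p where "p = a * Lc / (Lc + Ls)"
  define q where "q = a * Ls / (Lc + Ls)"
  have "a * Lc < (Lc + Ls) * Lc" "a * Ls < (Lc + Ls) * Ls"
    using assms Lc_pos Ls_pos by (auto intro!: mult_strict_right_mono)
  then have "0 \<le> p" "p < Lc" "0 \<le> q" "q < Ls"
    using assms Lc_pos Ls_pos by (auto simp: p_def q_def pos_divide_less_eq)
  have "p + q = a"
    using Lc_pos Ls_pos by (simp add: p_def q_def add_divide_distrib[symmetric] distrib_left[symmetric])
  define I where "I = (\<integral>\<^sup>+\<omega>. ennreal (H0 \<omega> powr (-p)) \<partial>M)
    * (\<integral>\<^sup>+\<omega>. ennreal (\<Gamma>0 \<omega> powr (-q)) \<partial>M)"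
  have "(\<integral>\<^sup>+\<omega>. ennreal (H0 \<omega> powr (-p)) \<partial>M) < \<infinity>"
    "(\<integral>\<^sup>+\<omega>. ennreal (\<Gamma>0 \<omega> powr (-q)) \<partial>M) < \<infinity>"
    using gamma_distributed_negative_moment_finite[OF prob_space_axioms Lc_pos _ _ _ H0_distributed]
      gamma_distributed_negative_moment_finite[OF prob_space_axioms Ls_pos _ _ _ \<Gamma>0_distributed]
      Lc_pos Ls_pos \<open>0 \<le> p\<close> \<open>p < Lc\<close> \<open>0 \<le> q\<close> \<open>q < Ls\<close> by simp_all
  then have "I < \<infinity>" by (simp add: I_def ennreal_mult_less_top)
  have "expected_distortion \<rho> \<le> enn2real I * \<rho> powr (-a)" if "0 < \<rho>" for \<rho>
  proof -
    have "ennreal (expected_distortion \<rho>)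
        = (\<integral>\<^sup>+\<omega>. ennreal (1 / (1 + \<rho> * H0 \<omega> + \<rho> * \<Gamma>0 \<omega>)) \<partial>M)"
      using that by (intro ennreal_expected_distortion) simp
    also have "\<dots> \<le> (\<integral>\<^sup>+\<omega>. ennreal (\<rho> powr (-a))
        * (ennreal (H0 \<omega> powr (-p)) * ennreal (\<Gamma>0 \<omega> powr (-q))) \<partial>M)"
      using AE_H0_\<Gamma>0_pos
    proof (intro nn_integral_mono_AE, eventually_elim)
      case (elim \<omega>)
      then have "1 / (1 + \<rho> * H0 \<omega> + \<rho> * \<Gamma>0 \<omega>)
          \<le> \<rho> powr (-a) * H0 \<omega> powr (-p) * \<Gamma>0 \<omega> powr (-q)"
        using that assms \<open>0 \<le> p\<close> \<open>0 \<le> q\<close> \<open>p + q = a\<close> by (intro one_div_one_plus_le_powr) auto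
      then show ?case by (simp add: ennreal_mult[symmetric] ennreal_leI mult.assoc)
    qed
    also have "\<dots> = ennreal (\<rho> powr (-a)) * I"
      using indep_var_nn_integral_mult[OF indep,
          of "\<lambda>x. ennreal (x powr (-p))" "\<lambda>y. ennreal (y powr (-q))"]
      by (simp add: I_def nn_integral_cmult)
    also have "\<dots> = ennreal (enn2real I * \<rho> powr (-a))"
      using \<open>I < \<infinity>\<close> by (simp add: ennreal_mult ennreal_enn2real mult.commute)
    finally show ?thesis by simp
  qed
  then show ?thesis by (intro exI[of _ "enn2real I"] eventually_at_top_linorderI[of 1]) auto
qed

end

theorem lemma7:
  fixes M :: "'a measure" and H0 \<Gamma>0 :: "'a \<Rightarrow> real" and Lc Ls :: real
  assumes "prob_space M"
    and "Lc > 0" and "Ls > 0"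
    and "prob_space.indep_var M borel H0 borel \<Gamma>0"
    and "distributed M lborel H0 (\<lambda>x. ennreal (gamma_density Lc (1 / Lc) x))"
    and "distributed M lborel \<Gamma>0 (\<lambda>x. ennreal (gamma_density Ls (1 / Ls) x))"
  shows "((\<lambda>\<rho>::real. - ln (prob_space.expectation M
              (\<lambda>\<omega>. 1 / (1 + \<rho> * H0 \<omega> + \<rho> * \<Gamma>0 \<omega>))) / ln \<rho>)
          \<longlongrightarrow> min (Ls + Lc) 1) at_top"
proof -
  interpret nakagami M H0 \<Gamma>0 Lc Ls
    using assms by (intro nakagami.intro nakagami_axioms.intro) auto
  obtain c where "0 < c" "\<forall>\<^sub>F \<rho> in at_top. c * \<rho> powr (- min (Ls + Lc) 1) \<le> expected_distortion \<rho>"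
    using expected_distortion_lower_bound by blast
  then have "((\<lambda>\<rho>. - ln (expected_distortion \<rho>) / ln \<rho>) \<longlongrightarrow> min (Ls + Lc) 1) at_top"
    using assms(2,3) expected_distortion_upper_bound by (intro tendsto_neg_ln_div_ln_at_top) auto
  then show ?thesis
    by (simp add: expected_distortion_def)
qed

end
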